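(* Let $\Phi\in\mathbb{R}^{n_{\mathscr D}\times n_g}$ and $y\in\mathbb{R}^{n_{\mathscr D}}$ with $\Phi^{\mathsf T}y\neq 0$, let $K\in\mathbb{R}^{n_g\times n_g}$ be symmetric positive definite, let $\lambda>0$, and let $g^{\mathrm{Reg}}=(\Phi^{\mathsf T}\Phi+\lambda K^{-1})^{-1}\Phi^{\mathsf T}y$. Then $g^{\mathrm{Reg}}\neq 0$, $\Phi g^{\mathrm{Reg}}-y\neq 0$, and with $$\rho := \lambda\,\frac{\big((g^{\mathrm{Reg}})^{\mathsf T}K^{-1}g^{\mathrm{Reg}}\big)^{1/2}}{\|\Phi g^{\mathrm{Reg}}-y\|}>0,$$ the vector $g^{\mathrm{Reg}}$ is a minimizer of $$\min_{g\in\mathbb{R}^{n_g}}\ \max_{\substack{\Delta\in\mathbb{R}^{n_{\mathscr D}\times n_g}\\ \|\Delta\|_K\le\rho}} \|(\Phi+\Delta)g-y\|.$$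
   Context: $\|\cdot\|$ denotes the Euclidean norm. For a symmetric positive definite $K\in\mathbb{R}^{n_g\times n_g}$ and a matrix $\Delta\in\mathbb{R}^{n_{\mathscr D}\times n_g}$, $\|\Delta\|_K := \big(\mathrm{tr}(\Delta K\Delta^{\mathsf T})\big)^{1/2}$. *)

theory Defs
  imports "HOL-Analysis.Analysis"
begin

definition sym_pos_def_mat :: "real^'n^'n \<Rightarrow> bool" where
  "sym_pos_def_mat K \<longleftrightarrow> transpose K = K \<and> (\<forall>x. x \<noteq> 0 \<longrightarrow> x \<bullet> (K *v x) > 0)"

definition K_norm :: "real^'n^'n \<Rightarrow> real^'n^'m \<Rightarrow> real" where
  "K_norm K D = sqrt (trace (D ** K ** transpose D))"

definition robust_obj :: "real^'n^'n \<Rightarrow> real \<Rightarrow> real^'n^'m \<Rightarrow> real^'m \<Rightarrow> real^'n \<Rightarrow> real" where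
  "robust_obj K \<rho> Phi y g = (SUP D \<in> {D. K_norm K D \<le> \<rho>}. norm ((Phi + D) *v g - y))"

definition g_reg :: "real^'n^'n \<Rightarrow> real \<Rightarrow> real^'n^'m \<Rightarrow> real^'m \<Rightarrow> real^'n" where
  "g_reg K lam Phi y = matrix_inv (transpose Phi ** Phi + lam *\<^sub>R matrix_inv K) *v (transpose Phi *v y)"

end

theory Submission imports Defs begin

text \<open>
  By a Cauchy-Schwarz inequality for the inner product of K, every perturbation with
  \<open>\<parallel>\<Delta>\<parallel>\<^sub>K \<le> \<rho>\<close> satisfies \<open>\<parallel>\<Delta> g\<parallel> \<le> \<rho> sqrt(g\<^sup>T K\<^sup>-\<^sup>1 g)\<close>, so the worst-case residual at g
  is at most \<open>\<parallel>\<Phi> g - y\<parallel> + \<rho> sqrt(g\<^sup>T K\<^sup>-\<^sup>1 g)\<close>. At the regularized solution g this bound is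
  attained by the rank-one perturbation \<open>\<Delta>\<^sup>* = (\<lambda>/\<parallel>r\<parallel>\<^sup>2) r (K\<^sup>-\<^sup>1 g)\<^sup>T\<close>, \<open>r = \<Phi> g - y\<close>, and
  the normal equation \<open>\<Phi>\<^sup>T r = -\<lambda> K\<^sup>-\<^sup>1 g\<close> of the regularized problem makes g a
  least-squares solution for \<open>\<Phi> + \<Delta>\<^sup>*\<close>. So for every g' the worst-case residual at g' is
  at least \<open>\<parallel>(\<Phi> + \<Delta>\<^sup>*) g' - y\<parallel> \<ge> \<parallel>(\<Phi> + \<Delta>\<^sup>*) g - y\<parallel>\<close>, the worst-case residual at g.
\<close>


lemma matrix_inv_mult_vector:
  fixes A :: "'a::field^'n^'n"
  assumes "\<And>x. A *v x = 0 \<Longrightarrow> x = 0"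
  shows "A *v (matrix_inv A *v z) = z" "matrix_inv A *v (A *v z) = z"
proof -
  have "invertible A"
    using assms matrix_left_invertible_ker invertible_left_inverse by blast
  then have "\<exists>A'. A ** A' = mat 1 \<and> A' ** A = mat 1"
    by (simp add: invertible_def)
  then have "A ** matrix_inv A = mat 1 \<and> matrix_inv A ** A = mat 1"
    unfolding matrix_inv_def by (rule someI_ex)
  then show "A *v (matrix_inv A *v z) = z" "matrix_inv A *v (A *v z) = z"
    by (simp_all add: matrix_vector_mul_assoc)
qed

lemma sym_pos_def_mat_nonneg:
  assumes "sym_pos_def_mat K"
  shows "x \<bullet> (K *v x) \<ge> 0"
  using assms unfolding sym_pos_def_mat_def by (metis inner_zero_left less_le order_refl)

lemma sym_pos_def_mat_inner_commute:
  assumes "sym_pos_def_mat K"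
  shows "x \<bullet> (K *v w) = w \<bullet> (K *v x)"
  using assms by (metis dot_lmul_matrix inner_commute sym_pos_def_mat_def transpose_matrix_vector)

lemma sym_pos_def_mat_matrix_inv:
  assumes "sym_pos_def_mat K"
  shows "K *v (matrix_inv K *v z) = z" "matrix_inv K *v (K *v z) = z"
proof -
  have "K *v x = 0 \<Longrightarrow> x = 0" for x
    using assms unfolding sym_pos_def_mat_def by (metis inner_zero_right less_irrefl)
  then show "K *v (matrix_inv K *v z) = z" "matrix_inv K *v (K *v z) = z"
    using matrix_inv_mult_vector by blast+
qed

lemma quadratic_form_matrix_inv:
  assumes "sym_pos_def_mat K"
  shows "v \<bullet> (matrix_inv K *v v) = (matrix_inv K *v v) \<bullet> (K *v (matrix_inv K *v v))"
  using sym_pos_def_mat_matrix_inv[OF assms] by (simp add: inner_commute)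

lemma quadratic_form_matrix_inv_nonneg:
  assumes "sym_pos_def_mat K"
  shows "v \<bullet> (matrix_inv K *v v) \<ge> 0"
  using quadratic_form_matrix_inv[OF assms] sym_pos_def_mat_nonneg[OF assms] by simp

lemma quadratic_form_matrix_inv_pos:
  assumes "sym_pos_def_mat K" "v \<noteq> 0"
  shows "v \<bullet> (matrix_inv K *v v) > 0"
proof -
  have "matrix_inv K *v v \<noteq> 0"
    using sym_pos_def_mat_matrix_inv(1)[OF assms(1), of v] assms(2) by auto
  then show ?thesis
    using assms(1) quadratic_form_matrix_inv[OF assms(1)] by (simp add: sym_pos_def_mat_def)
qed

lemma sym_pos_def_mat_cauchy_schwarz:
  assumes "sym_pos_def_mat K"
  shows "(x \<bullet> (K *v w))\<^sup>2 \<le> (x \<bullet> (K *v x)) * (w \<bullet> (K *v w))"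
proof (cases "w = 0")
  case True
  then show ?thesis by simp
next
  case False
  define b where "b = x \<bullet> (K *v w)"
  define c where "c = w \<bullet> (K *v w)"
  define t where "t = b / c"
  have c: "c > 0" using assms False by (simp add: c_def sym_pos_def_mat_def)
  have "0 \<le> (x - t *\<^sub>R w) \<bullet> (K *v (x - t *\<^sub>R w))"
    by (rule sym_pos_def_mat_nonneg[OF assms])
  also have "\<dots> = x \<bullet> (K *v x) - 2 * t * b + t\<^sup>2 * c"
    using sym_pos_def_mat_inner_commute[OF assms, of w x]
    by (simp add: b_def c_def power2_eq_square algebra_simps)
  also have "\<dots> = x \<bullet> (K *v x) - b\<^sup>2 / c"
    using c by (simp add: t_def power2_eq_square field_simps)
  finally show ?thesis
    using c by (simp add: b_def c_def field_simps)
qed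

lemma trace_eq_sum_quadratic_form_rows:
  fixes K :: "real^'n^'n" and D :: "real^'n^'m"
  shows "trace (D ** K ** transpose D) = (\<Sum>i\<in>UNIV. (D$i) \<bullet> (K *v (D$i)))"
proof -
  have "(D ** K ** transpose D)$i$i = (D$i) \<bullet> (K *v (D$i))" for i
  proof -
    have "(D ** K ** transpose D)$i$i = (\<Sum>k\<in>UNIV. \<Sum>l\<in>UNIV. D$i$l * (K$l$k * D$i$k))"
      by (simp add: matrix_matrix_mult_def transpose_def sum_distrib_right mult.assoc)
    also have "\<dots> = (\<Sum>l\<in>UNIV. \<Sum>k\<in>UNIV. D$i$l * (K$l$k * D$i$k))"
      by (rule sum.swap)
    finally show ?thesis
      by (simp add: inner_vec_def matrix_vector_mult_def sum_distrib_left)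
  qed
  then show ?thesis by (simp add: trace_def)
qed

lemma norm_sq_eq_sum: "(norm (x::real^'m))\<^sup>2 = (\<Sum>i\<in>UNIV. (x$i)\<^sup>2)"
  unfolding power2_norm_eq_inner inner_vec_def by (simp add: power2_eq_square)

lemma norm_matrix_vector_le_K_norm:
  fixes K :: "real^'n^'n" and D :: "real^'n^'m"
  assumes "sym_pos_def_mat K"
  shows "norm (D *v (K *v w)) \<le> K_norm K D * sqrt (w \<bullet> (K *v w))"
proof -
  have row: "(D *v (K *v w))$i = (D$i) \<bullet> (K *v w)" for i
    by (simp add: matrix_vector_mult_def inner_vec_def)
  have "(norm (D *v (K *v w)))\<^sup>2 = (\<Sum>i\<in>UNIV. ((D$i) \<bullet> (K *v w))\<^sup>2)"
    by (simp add: norm_sq_eq_sum row)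
  also have "\<dots> \<le> (\<Sum>i\<in>UNIV. ((D$i) \<bullet> (K *v (D$i))) * (w \<bullet> (K *v w)))"
    by (rule sum_mono) (rule sym_pos_def_mat_cauchy_schwarz[OF assms])
  also have "\<dots> = trace (D ** K ** transpose D) * (w \<bullet> (K *v w))"
    by (simp add: trace_eq_sum_quadratic_form_rows sum_distrib_right)
  finally have "norm (D *v (K *v w)) \<le> sqrt (trace (D ** K ** transpose D) * (w \<bullet> (K *v w)))"
    using real_le_rsqrt by blast
  then show ?thesis
    by (simp add: K_norm_def real_sqrt_mult)
qed

lemma K_norm_outer_product:
  fixes K :: "real^'n^'n" and u :: "real^'m"
  shows "K_norm K (\<chi> i j. u$i * w$j) = norm u * sqrt (w \<bullet> (K *v w))"
proof -
  have rows: "(\<chi> j. u$i * w$j) = u$i *\<^sub>R w" for i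
    by (simp add: vec_eq_iff)
  have "trace ((\<chi> i j. u$i * w$j) ** K ** transpose (\<chi> i j. u$i * w$j))
      = (\<Sum>i\<in>UNIV. (u$i)\<^sup>2 * (w \<bullet> (K *v w)))"
    by (simp add: trace_eq_sum_quadratic_form_rows rows matrix_vector_mult_scaleR
        power2_eq_square mult.assoc)
  also have "\<dots> = (norm u)\<^sup>2 * (w \<bullet> (K *v w))"
    by (simp add: norm_sq_eq_sum sum_distrib_right)
  finally show ?thesis by (simp add: K_norm_def real_sqrt_mult)
qed

lemma transpose_add: "transpose (A + B) = transpose A + transpose (B :: 'a::semiring_1^'n^'m)"
  by (simp add: transpose_def vec_eq_iff)

lemma outer_product_mult_vector:
  "(\<chi> i j. u$i * w$j) *v x = (w \<bullet> x) *\<^sub>R (u :: real^'m)"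
  by (simp add: vec_eq_iff matrix_vector_mult_def inner_vec_def sum_distrib_left algebra_simps)

lemma transpose_outer_product_mult_vector:
  "transpose (\<chi> i j. (u :: real^'m)$i * w$j) *v z = (u \<bullet> z) *\<^sub>R w"
  by (simp add: vec_eq_iff vector_matrix_mult_def inner_vec_def sum_distrib_left ac_simps)

lemma norm_perturbed_residual_le:
  fixes K :: "real^'n^'n" and Phi :: "real^'n^'m"
  assumes "sym_pos_def_mat K" "K_norm K D \<le> \<rho>"
  shows "norm ((Phi + D) *v g - y) \<le> norm (Phi *v g - y) + \<rho> * sqrt (g \<bullet> (matrix_inv K *v g))"
proof -
  have "norm (D *v g) = norm (D *v (K *v (matrix_inv K *v g)))"
    by (simp only: sym_pos_def_mat_matrix_inv(1)[OF assms(1)])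
  also have "\<dots> \<le> K_norm K D * sqrt ((matrix_inv K *v g) \<bullet> (K *v (matrix_inv K *v g)))"
    by (rule norm_matrix_vector_le_K_norm[OF assms(1)])
  also have "\<dots> = K_norm K D * sqrt (g \<bullet> (matrix_inv K *v g))"
    by (simp only: quadratic_form_matrix_inv[OF assms(1), symmetric])
  also have "\<dots> \<le> \<rho> * sqrt (g \<bullet> (matrix_inv K *v g))"
    using assms(2) quadratic_form_matrix_inv_nonneg[OF assms(1)] by (simp add: mult_right_mono)
  finally have "norm (D *v g) \<le> \<rho> * sqrt (g \<bullet> (matrix_inv K *v g))" .
  moreover have "(Phi + D) *v g - y = (Phi *v g - y) + D *v g"
    by (simp add: matrix_vector_mult_add_rdistrib)
  then have "norm ((Phi + D) *v g - y) \<le> norm (Phi *v g - y) + norm (D *v g)"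
    by (simp only: norm_triangle_ineq)
  ultimately show ?thesis by linarith
qed

lemma robust_obj_le:
  fixes K :: "real^'n^'n" and Phi :: "real^'n^'m"
  assumes "sym_pos_def_mat K" "\<rho> \<ge> 0"
  shows "robust_obj K \<rho> Phi y g \<le> norm (Phi *v g - y) + \<rho> * sqrt (g \<bullet> (matrix_inv K *v g))"
  unfolding robust_obj_def
proof (rule cSUP_least)
  show "{D::real^'n^'m. K_norm K D \<le> \<rho>} \<noteq> {}"
    using assms(2) by (auto simp: K_norm_def trace_def intro!: exI[of _ 0])
qed (use norm_perturbed_residual_le[OF assms(1)] in blast)

lemma robust_obj_ge:
  fixes K :: "real^'n^'n" and Phi :: "real^'n^'m"
  assumes "sym_pos_def_mat K" "K_norm K D \<le> \<rho>"
  shows "norm ((Phi + D) *v g - y) \<le> robust_obj K \<rho> Phi y g"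
  unfolding robust_obj_def
proof (rule cSUP_upper)
  show "bdd_above ((\<lambda>D. norm ((Phi + D) *v g - y)) ` {D. K_norm K D \<le> \<rho>})"
    using norm_perturbed_residual_le[OF assms(1)] by (intro bdd_aboveI2) auto
qed (use assms(2) in simp)

lemma norm_residual_le_of_normal_equation:
  fixes M :: "real^'n^'m"
  assumes "transpose M *v (M *v g - y) = 0"
  shows "norm (M *v g - y) \<le> norm (M *v g' - y)"
proof -
  have split: "M *v g' - y = (M *v g - y) + M *v (g' - g)"
    by (simp add: matrix_vector_mult_diff_distrib)
  have "orthogonal (M *v g - y) (M *v (g' - g))"
    using assms dot_lmul_matrix[of "M *v g - y" M "g' - g"] by (simp add: orthogonal_def)
  then have "(norm (M *v g' - y))\<^sup>2 = (norm (M *v g - y))\<^sup>2 + (norm (M *v (g' - g)))\<^sup>2"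
    unfolding split by (rule norm_add_Pythagorean)
  then have "(norm (M *v g - y))\<^sup>2 \<le> (norm (M *v g' - y))\<^sup>2"
    using zero_le_power2[of "norm (M *v (g' - g))"] by linarith
  then show ?thesis
    using norm_ge_zero by (rule power2_le_imp_le)
qed

text \<open>
  At a stationary point of \<open>\<parallel>\<Phi> g - y\<parallel>\<^sup>2 + \<lambda> g\<^sup>T K\<^sup>-\<^sup>1 g\<close> the rank-one perturbation
  \<open>(\<lambda>/\<parallel>r\<parallel>\<^sup>2) r (K\<^sup>-\<^sup>1 g)\<^sup>T\<close>, \<open>r = \<Phi> g - y\<close>, keeps the residual parallel to r and cancels the
  term \<open>\<Phi>\<^sup>T r = -\<lambda> K\<^sup>-\<^sup>1 g\<close> in the normal equation.
\<close>
lemma worst_case_perturbation: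
  fixes Phi :: "real^'n^'m" and K :: "real^'n^'n"
  assumes K: "sym_pos_def_mat K" and lam: "lam > 0" and r: "Phi *v g - y \<noteq> 0"
    and stationary: "transpose Phi *v (Phi *v g - y) = - lam *\<^sub>R (matrix_inv K *v g)"
  defines "\<rho> \<equiv> lam * sqrt (g \<bullet> (matrix_inv K *v g)) / norm (Phi *v g - y)"
  obtains D where "K_norm K D = \<rho>"
    and "norm ((Phi + D) *v g - y) = norm (Phi *v g - y) + \<rho> * sqrt (g \<bullet> (matrix_inv K *v g))"
    and "transpose (Phi + D) *v ((Phi + D) *v g - y) = 0"
proof -
  define r where "r = Phi *v g - y"
  define w where "w = matrix_inv K *v g"
  define q where "q = g \<bullet> w"
  define a where "a = lam / (norm r)\<^sup>2"
  define D :: "real^'n^'m" where "D = (\<chi> i j. (a *\<^sub>R r)$i * w$j)"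
  have nr: "norm r > 0" using r by (simp add: r_def)
  have q: "q \<ge> 0" using quadratic_form_matrix_inv_nonneg[OF K] by (simp add: q_def w_def)
  have wKw: "w \<bullet> (K *v w) = q"
    using quadratic_form_matrix_inv[OF K, of g] by (simp add: q_def w_def)
  have "K_norm K D = a * norm r * sqrt q"
    unfolding D_def K_norm_outer_product wKw using lam by (simp add: a_def)
  then have norm_D: "K_norm K D = \<rho>"
    using nr by (simp add: \<rho>_def a_def power2_eq_square flip: r_def q_def w_def)
  have residual: "(Phi + D) *v g - y = (1 + a * q) *\<^sub>R r"
    unfolding matrix_vector_mult_add_rdistrib D_def outer_product_mult_vector
    by (simp add: r_def q_def inner_commute algebra_simps)
  have "a * q \<ge> 0" using lam q by (simp add: a_def)
  then have "norm ((Phi + D) *v g - y) = (1 + a * q) * norm r"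
    unfolding residual by simp
  also have "\<dots> = norm r + \<rho> * sqrt q"
    using nr q by (simp add: \<rho>_def a_def power2_eq_square field_simps flip: r_def q_def w_def)
  finally have attained:
    "norm ((Phi + D) *v g - y) = norm (Phi *v g - y) + \<rho> * sqrt (g \<bullet> (matrix_inv K *v g))"
    by (simp add: r_def q_def w_def)
  have "transpose (Phi + D) *v r = transpose Phi *v r + (a *\<^sub>R r \<bullet> r) *\<^sub>R w"
    unfolding transpose_add matrix_vector_mult_add_rdistrib D_def transpose_outer_product_mult_vector ..
  also have "\<dots> = 0"
    using stationary nr by (simp add: a_def power2_norm_eq_inner r_def w_def)
  finally have "transpose (Phi + D) *v ((Phi + D) *v g - y) = 0"
    by (simp add: residual matrix_vector_mult_scaleR)
  with norm_D attained show ?thesis by (rule that)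
qed

lemma robust_obj_minimal_at_stationary_point:
  fixes Phi :: "real^'n^'m" and K :: "real^'n^'n"
  assumes K: "sym_pos_def_mat K" and lam: "lam > 0" and r: "Phi *v g - y \<noteq> 0"
    and stationary: "transpose Phi *v (Phi *v g - y) = - lam *\<^sub>R (matrix_inv K *v g)"
  defines "\<rho> \<equiv> lam * sqrt (g \<bullet> (matrix_inv K *v g)) / norm (Phi *v g - y)"
  shows "robust_obj K \<rho> Phi y g \<le> robust_obj K \<rho> Phi y g'"
proof -
  obtain D where D: "K_norm K D = \<rho>"
    and attained: "norm ((Phi + D) *v g - y) = norm (Phi *v g - y) + \<rho> * sqrt (g \<bullet> (matrix_inv K *v g))"
    and normal: "transpose (Phi + D) *v ((Phi + D) *v g - y) = 0"
    using worst_case_perturbation[OF K lam r stationary] unfolding \<rho>_def by blast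
  have "\<rho> \<ge> 0"
    using lam quadratic_form_matrix_inv_nonneg[OF K] by (simp add: \<rho>_def)
  then have "robust_obj K \<rho> Phi y g \<le> norm ((Phi + D) *v g - y)"
    using robust_obj_le[OF K] attained by simp
  also have "\<dots> \<le> norm ((Phi + D) *v g' - y)"
    using normal by (rule norm_residual_le_of_normal_equation)
  also have "\<dots> \<le> robust_obj K \<rho> Phi y g'"
    by (rule robust_obj_ge[OF K]) (simp add: D)
  finally show ?thesis .
qed

lemma regularized_gram_injective:
  fixes Phi :: "real^'n^'m"
  assumes K: "sym_pos_def_mat K" and lam: "lam > 0"
    and x: "(transpose Phi ** Phi + lam *\<^sub>R matrix_inv K) *v x = 0"
  shows "x = 0"
proof (rule ccontr)
  assume "x \<noteq> 0"
  have "x \<bullet> (transpose Phi *v (Phi *v x)) = (norm (Phi *v x))\<^sup>2"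
    by (metis dot_lmul_matrix inner_commute power2_norm_eq_inner transpose_matrix_vector)
  then have "x \<bullet> ((transpose Phi ** Phi + lam *\<^sub>R matrix_inv K) *v x)
      = (norm (Phi *v x))\<^sup>2 + lam * (x \<bullet> (matrix_inv K *v x))"
    by (simp only: matrix_vector_mult_add_rdistrib matrix_vector_mul_assoc[symmetric]
        scaleR_matrix_vector_assoc[symmetric] inner_add_right inner_scaleR_right)
  also have "\<dots> > 0"
    using lam quadratic_form_matrix_inv_pos[OF K \<open>x \<noteq> 0\<close>] by (simp add: add_nonneg_pos)
  finally show False using x by simp
qed

lemma g_reg_normal_equation:
  fixes Phi :: "real^'n^'m"
  assumes K: "sym_pos_def_mat K" and lam: "lam > 0"
  shows "transpose Phi *v (Phi *v g_reg K lam Phi y - y)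
    = - lam *\<^sub>R (matrix_inv K *v g_reg K lam Phi y)"
proof -
  define A where "A = transpose Phi ** Phi + lam *\<^sub>R matrix_inv K"
  have "A *v g_reg K lam Phi y = transpose Phi *v y"
    unfolding g_reg_def A_def[symmetric]
    using regularized_gram_injective[OF K lam] by (intro matrix_inv_mult_vector) (simp add: A_def)
  then have "transpose Phi *v (Phi *v g_reg K lam Phi y) + lam *\<^sub>R (matrix_inv K *v g_reg K lam Phi y)
      = transpose Phi *v y"
    by (simp only: A_def matrix_vector_mult_add_rdistrib matrix_vector_mul_assoc[symmetric]
        scaleR_matrix_vector_assoc[symmetric])
  then show ?thesis
    by (simp add: matrix_vector_mult_diff_distrib algebra_simps)
qed

theorem mainTheorem3:
  fixes Phi :: "real^'n^'m" and y :: "real^'m" and K :: "real^'n^'n" and lam :: real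
  assumes "transpose Phi *v y \<noteq> 0"
    and "sym_pos_def_mat K"
    and "lam > 0"
  shows "g_reg K lam Phi y \<noteq> 0
    \<and> Phi *v g_reg K lam Phi y - y \<noteq> 0
    \<and> (let g = g_reg K lam Phi y;
           \<rho> = lam * sqrt (g \<bullet> (matrix_inv K *v g)) / norm (Phi *v g - y)
       in \<rho> > 0 \<and> (\<forall>g'. robust_obj K \<rho> Phi y g \<le> robust_obj K \<rho> Phi y g'))"
proof -
  define g where "g = g_reg K lam Phi y"
  have normal: "transpose Phi *v (Phi *v g - y) = - lam *\<^sub>R (matrix_inv K *v g)"
    unfolding g_def using assms(2,3) by (rule g_reg_normal_equation)
  have g: "g \<noteq> 0"
    using normal assms(1) by (auto simp: matrix_vector_mult_diff_distrib)
  have r: "Phi *v g - y \<noteq> 0"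
  proof
    assume "Phi *v g - y = 0"
    then have "matrix_inv K *v g = 0" using normal assms(3) by simp
    then show False
      using g sym_pos_def_mat_matrix_inv(1)[OF assms(2), of g] by simp
  qed
  have "lam * sqrt (g \<bullet> (matrix_inv K *v g)) / norm (Phi *v g - y) > 0"
    using assms(3) quadratic_form_matrix_inv_pos[OF assms(2) g] r by simp
  then show ?thesis
    using g r robust_obj_minimal_at_stationary_point[OF assms(2,3) r normal]
    unfolding g_def[symmetric] Let_def by blast
qed

end
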